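(* Let $N$ be a simply connected nilpotent Lie group and $|\cdot|$ a quasi-norm on $N$. Then for every $\varepsilon>0$ there exist $\delta>0$ and $C>0$ such that for all $x,y\in N$ with $|y|>C$ and $|x|\le\delta|y|$ we have $\big||xy|-|y|\big|\le\varepsilon|y|$.
   Context: $N$ is identified with its Lie algebra $\mathfrak n$ via the exponential map; $xy$ is the group product. Let $C^p(\mathfrak n)$ be the descending central series. A quasi-norm on $N$ is a continuous $|\cdot|:\mathfrak n\to[0,\infty)$ with $|x|=0$ iff $x=0$ and $|\delta_tx|=t|x|$ for all $t>0$, where $(\delta_t)_{t>0}$ is a one-parameter group of dilations: for some choice of subspaces $m_p$ with $C^p(\mathfrak n)=m_p\oplus C^{p+1}(\mathfrak n)$, $\delta_t$ is linear and acts by $t^p$ on $m_p$. *)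

theory Defs
  imports "HOL-Analysis.Analysis"
begin

definition lie_algebra :: "('a::euclidean_space \<Rightarrow> 'a \<Rightarrow> 'a) \<Rightarrow> bool" where
  "lie_algebra br \<longleftrightarrow> bilinear br \<and> (\<forall>x. br x x = 0) \<and>
     (\<forall>x y z. br x (br y z) + br y (br z x) + br z (br x y) = 0)"

fun lcs :: "('a::euclidean_space \<Rightarrow> 'a \<Rightarrow> 'a) \<Rightarrow> nat \<Rightarrow> 'a set" where
  "lcs br 0 = UNIV"
| "lcs br (Suc 0) = UNIV"
| "lcs br (Suc (Suc p)) = span {br x y | x y. y \<in> lcs br (Suc p)}"

definition nilpotent_lie :: "('a::euclidean_space \<Rightarrow> 'a \<Rightarrow> 'a) \<Rightarrow> bool" where
  "nilpotent_lie br \<longleftrightarrow> (\<exists>k. lcs br k = {0})"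

fun rbr :: "('a \<Rightarrow> 'a \<Rightarrow> 'a) \<Rightarrow> 'a list \<Rightarrow> 'a::real_vector" where
  "rbr br [] = 0"
| "rbr br [z] = z"
| "rbr br (z # zs) = br z (rbr br zs)"

text \<open>Group product on N identified with its Lie algebra via exp: the
  Baker-Campbell-Hausdorff series in Dynkin's form, truncated at degree DIM('a)
  (all higher terms vanish for a nilpotent Lie algebra, whose step is at most DIM('a)).\<close>
definition dynkin_words :: "nat \<Rightarrow> nat \<Rightarrow> (nat \<times> nat) list set" where
  "dynkin_words K n = {rs. length rs = n \<and> set rs \<subseteq> {0..K} \<times> {0..K} \<and>
      (\<forall>(r, s) \<in> set rs. 0 < r + s) \<and> sum_list (map (\<lambda>(r, s). r + s) rs) \<le> K}"

definition gmul :: "('a::euclidean_space \<Rightarrow> 'a \<Rightarrow> 'a) \<Rightarrow> 'a \<Rightarrow> 'a \<Rightarrow> 'a" where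
  "gmul br x y =
    (\<Sum>n\<in>{1..DIM('a)}. \<Sum>rs\<in>dynkin_words DIM('a) n.
       ((-1) ^ (n - 1) / real n
         / (real (sum_list (map (\<lambda>(r, s). r + s) rs))
            * (\<Prod>(r, s)\<leftarrow>rs. fact r * fact s)))
       *\<^sub>R rbr br (concat (map (\<lambda>(r, s). replicate r x @ replicate s y) rs)))"

definition dilation_family :: "('a::euclidean_space \<Rightarrow> 'a \<Rightarrow> 'a) \<Rightarrow> (real \<Rightarrow> 'a \<Rightarrow> 'a) \<Rightarrow> bool" where
  "dilation_family br \<delta> \<longleftrightarrow>
     (\<exists>m :: nat \<Rightarrow> 'a set.
        (\<forall>p\<ge>1. subspace (m p) \<and> m p \<inter> lcs br (Suc p) = {0} \<and>
                {u + v | u v. u \<in> m p \<and> v \<in> lcs br (Suc p)} = lcs br p) \<and>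
        (\<forall>t>0. linear (\<delta> t) \<and> (\<forall>p\<ge>1. \<forall>v\<in>m p. \<delta> t v = t ^ p *\<^sub>R v)))"

definition quasi_norm :: "('a::euclidean_space \<Rightarrow> 'a \<Rightarrow> 'a) \<Rightarrow> ('a \<Rightarrow> real) \<Rightarrow> bool" where
  "quasi_norm br q \<longleftrightarrow> continuous_on UNIV q \<and> (\<forall>x. 0 \<le> q x) \<and> (\<forall>x. q x = 0 \<longleftrightarrow> x = 0) \<and>
     (\<exists>\<delta>. dilation_family br \<delta> \<and> (\<forall>t>0. \<forall>x. q (\<delta> t x) = t * q x))"

end

theory Submission
  imports Defs
begin

text \<open>Rescale by the dilations: for \<open>|y| = t > 1\<close> put \<open>s = 1/t\<close>, \<open>a = \<delta>\<^sub>s x\<close> and \<open>b = \<delta>\<^sub>s y\<close>, so that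
  \<open>|b| = 1\<close>, \<open>|a| = |x| / |y|\<close> and \<open>s |xy| = |\<Psi>(s, a, b)|\<close> with \<open>\<Psi>(s, a, b) = \<delta>\<^sub>s (\<delta>\<^sub>1\<^sub>/\<^sub>s a \<cdot> \<delta>\<^sub>1\<^sub>/\<^sub>s b)\<close>.
  The product is a polynomial in iterated brackets and brackets respect the filtration by the
  descending central series, so the \<open>m\<^sub>k\<close>-component of \<open>\<Psi>\<close> involves only nonnegative powers of \<open>s\<close>
  and \<open>\<Psi>\<close> extends continuously to \<open>s = 0\<close>. Since \<open>\<Psi>(s, 0, b) = b\<close>, uniform continuity of \<open>|\<Psi>|\<close> on
  the compact set \<open>[0,1] \<times> {|a| \<le> 1} \<times> {|b| = 1}\<close> gives \<open>||\<Psi>(s, a, b)| - 1| < \<epsilon>\<close> once \<open>a\<close> is small.\<close>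

section \<open>The descending central series\<close>

lemma lcs_subspace: "subspace (lcs br p)"
  by (induction br p rule: lcs.induct) (auto simp: subspace_span)

lemma lcs_Suc_subset: "lcs br (Suc p) \<subseteq> lcs br p"
proof (induction br p rule: lcs.induct)
  case (3 br p)
  then have "{br x y | x y. y \<in> lcs br (Suc (Suc p))} \<subseteq> {br x y | x y. y \<in> lcs br (Suc p)}"
    by blast
  then show ?case by (simp add: span_mono)
qed simp_all

lemma lcs_antimono: "p \<le> q \<Longrightarrow> lcs br q \<subseteq> lcs br p"
  by (induction q rule: dec_induct) (use lcs_Suc_subset in blast)+

lemma nilpotent_lie_lcs_Suc:
  assumes "nilpotent_lie br"
  obtains K where "lcs br (Suc K) = {0}"
proof -
  obtain K where "lcs br K = {0}" using assms unfolding nilpotent_lie_def by blast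
  then have "lcs br (Suc K) = {0}"
    using lcs_Suc_subset[of br K] subspace_0[OF lcs_subspace[of br "Suc K"]] by blast
  then show thesis by (rule that)
qed

lemma lie_algebra_antisym:
  assumes "lie_algebra br" shows "br x y = - br y x"
proof -
  have bil: "bilinear br" and alt: "\<And>x. br x x = 0"
    using assms unfolding lie_algebra_def by auto
  have "0 = br (x + y) (x + y)" by (simp add: alt)
  also have "\<dots> = br x x + br x y + br y x + br y y"
    using bil by (simp add: bilinear_ladd bilinear_radd)
  finally show ?thesis by (simp add: alt eq_neg_iff_add_eq_0)
qed

text \<open>The Jacobi identity reduces \<open>[[a, b], y]\<close> to \<open>[a, [b, y]]\<close> and \<open>[b, [y, a]]\<close>.\<close>
lemma lcs_bracket_Suc:
  assumes lie: "lie_algebra br"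
  shows "x \<in> lcs br (Suc i) \<Longrightarrow> y \<in> lcs br (Suc j) \<Longrightarrow> br x y \<in> lcs br (Suc i + Suc j)"
proof (induction i arbitrary: x y j)
  case 0
  then show ?case by (auto intro!: span_base)
next
  case (Suc i)
  have bil: "bilinear br" and jac: "\<And>x y z. br x (br y z) + br y (br z x) + br z (br x y) = 0"
    using lie unfolding lie_algebra_def by auto
  let ?C = "lcs br (Suc (Suc i) + Suc j)"
  have sp: "subspace ?C" by (rule lcs_subspace)
  have x: "x \<in> span {br a b | a b. b \<in> lcs br (Suc i)}" using Suc.prems by simp
  have sub: "subspace {x. br x y \<in> ?C}"
    using sp bil by (auto simp: bilinear_lzero bilinear_ladd bilinear_lmul subspace_def)
  have "br (br a b) y \<in> ?C" if b: "b \<in> lcs br (Suc i)" for a b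
  proof -
    have "br y (br a b) + br a (br b y) + br b (br y a) = 0" by (rule jac)
    then have jac_ab: "br (br a b) y = br a (br b y) + br b (br y a)"
      by (metis lie_algebra_antisym[OF lie] add.assoc add_eq_0_iff)
    have "br b y \<in> lcs br (Suc (i + Suc j))" using Suc.IH b Suc.prems(2) by simp
    then have "br a (br b y) \<in> ?C" by (auto intro!: span_base)
    moreover have "br a y \<in> lcs br (Suc (Suc j))" using Suc.prems(2) by (auto intro!: span_base)
    then have "br y a \<in> lcs br (Suc (Suc j))"
      using lie_algebra_antisym[OF lie] lcs_subspace subspace_neg by metis
    then have "br b (br y a) \<in> ?C" using Suc.IH[of b "br y a" "Suc j"] b by simp
    ultimately show ?thesis using jac_ab sp subspace_add by metis
  qed
  then show ?case using span_induct[OF x sub] by blast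
qed

lemma lcs_bracket:
  assumes "lie_algebra br" "1 \<le> i" "1 \<le> j" "x \<in> lcs br i" "y \<in> lcs br j"
  shows "br x y \<in> lcs br (i + j)"
  using lcs_bracket_Suc[OF assms(1), of x "i - 1" y "j - 1"] assms(2-) by simp

lemma dynkin_words_finite: "finite (dynkin_words K n)"
proof -
  have "dynkin_words K n \<subseteq> {xs. set xs \<subseteq> {0..K} \<times> {0..K} \<and> length xs = n}"
    unfolding dynkin_words_def by auto
  then show ?thesis using finite_lists_length_eq[of "{0..K} \<times> {0..K}" n] finite_subset by blast
qed

lemma dynkin_word_map:
  "concat (map (\<lambda>(r, s). replicate r (f a) @ replicate s (f b)) rs)
     = map f (concat (map (\<lambda>(r, s). replicate r a @ replicate s b) rs))"
  by (induction rs) (auto simp: map_replicate)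

lemma dynkin_word_set: "set (concat (map (\<lambda>(r, s). replicate r a @ replicate s b) rs)) \<subseteq> {a, b}"
  by (induction rs) auto

lemma dynkin_word_eq_single:
  assumes "y \<noteq> 0" "\<forall>(r, s) \<in> set rs. 0 < r + s"
    and "concat (map (\<lambda>(r, s). replicate r 0 @ replicate s y) rs) = [y]"
  shows "rs = [(0, 1)]"
proof (cases rs)
  case (Cons a rs')
  let ?w = "concat (map (\<lambda>(r, s). replicate r 0 @ replicate s y) rs')"
  obtain r s where a: "a = (r, s)" by force
  have w: "replicate r 0 @ replicate s y @ ?w = [y]" using assms(3) Cons a by simp
  have pos: "0 < r + s" using assms(2) Cons a by auto
  have "r = 0" using w assms(1) by (cases r) auto
  moreover have "s + length ?w = 1" using arg_cong[OF w, of length] \<open>r = 0\<close> by simp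
  ultimately have "s = 1" using pos by linarith
  then have "length ?w = 0" using \<open>s + length ?w = 1\<close> by linarith
  then have "?w = []" by (simp only: length_0_conv)
  moreover have "rs' = []"
  proof (cases rs')
    case (Cons b rs'')
    moreover obtain r' s' where "b = (r', s')" by force
    moreover have "0 < r' + s'" using assms(2) \<open>rs = a # rs'\<close> Cons \<open>b = (r', s')\<close> by auto
    ultimately show ?thesis using \<open>?w = []\<close> by auto
  qed
  ultimately show ?thesis using Cons a \<open>r = 0\<close> \<open>s = 1\<close> by simp
qed (use assms in simp)

lemma rbr_zero_or_single:
  assumes "bilinear br" "\<And>x. br x x = 0"
  shows "set ws \<subseteq> {0, y} \<Longrightarrow> rbr br ws = (if ws = [y] then y else 0)"
proof (induction ws)
  case (Cons z ws)
  show ?case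
  proof (cases ws)
    case (Cons v va)
    have "z = 0 \<or> z = y" using Cons.prems by auto
    moreover have "rbr br ws = (if ws = [y] then y else 0)" using Cons.IH Cons.prems by auto
    ultimately have "br z (rbr br ws) = 0"
      using assms bilinear_lzero[OF assms(1)] bilinear_rzero[OF assms(1)] by auto
    then show ?thesis using Cons by simp
  qed (use Cons.prems in auto)
qed simp

text \<open>Only the word \<open>[(0, 1)]\<close> survives: every other word is either empty or a bracket containing
  \<open>0\<close> or \<open>[y, y]\<close>.\<close>
lemma gmul_zero_left:
  fixes br :: "'a::euclidean_space \<Rightarrow> 'a \<Rightarrow> 'a"
  assumes bil: "bilinear br" and alt: "\<And>x. br x x = 0"
  shows "gmul br 0 y = y"
proof (cases "y = 0")
  case True
  have "rbr br (concat (map (\<lambda>(r, s). replicate r 0 @ replicate s y) rs)) = 0" for rs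
    using rbr_zero_or_single[OF bil alt, of _ y] dynkin_word_set[of 0 y rs] True by (auto simp del: set_concat)
  then show ?thesis using True by (simp add: gmul_def)
next
  case False
  define c where "c = (\<lambda>(n::nat) rs. ((-1) ^ (n - 1) / real n
     / (real (sum_list (map (\<lambda>(r, s). r + s) rs)) * (\<Prod>(r, s)\<leftarrow>rs. fact r * fact s))) :: real)"
  define w where "w = (\<lambda>rs. concat (map (\<lambda>(r, s). replicate r (0::'a) @ replicate s y) rs))"
  have rbr_w: "rbr br (w rs) = (if rs = [(0, 1)] then y else 0)"
    if "rs \<in> dynkin_words DIM('a) n" for rs n
  proof -
    have "\<forall>(r, s) \<in> set rs. 0 < r + s" using that unfolding dynkin_words_def by blast
    then have "w rs = [y] \<longleftrightarrow> rs = [(0, 1)]"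
      using dynkin_word_eq_single[OF False] unfolding w_def by auto
    then show ?thesis
      using rbr_zero_or_single[OF bil alt] dynkin_word_set[of 0 y rs] unfolding w_def by auto
  qed
  have single: "[(0, 1)] \<in> dynkin_words DIM('a) n \<longleftrightarrow> n = 1" for n
    using DIM_positive[where 'a='a] unfolding dynkin_words_def by auto
  have "gmul br 0 y = (\<Sum>n\<in>{1..DIM('a)}. \<Sum>rs\<in>dynkin_words DIM('a) n. c n rs *\<^sub>R rbr br (w rs))"
    unfolding gmul_def c_def w_def by simp
  also have "\<dots> = (\<Sum>n\<in>{1..DIM('a)}. \<Sum>rs\<in>dynkin_words DIM('a) n.
                     if rs = [(0, 1)] then c n [(0, 1)] *\<^sub>R y else 0)"
    by (intro sum.cong refl) (simp add: rbr_w)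
  also have "\<dots> = (\<Sum>n\<in>{1..DIM('a)}. if n = 1 then c n [(0, 1)] *\<^sub>R y else 0)"
    by (intro sum.cong refl) (simp only: sum.delta[OF dynkin_words_finite] single)
  also have "\<dots> = y" using DIM_positive[where 'a='a] by (simp add: c_def)
  finally show ?thesis .
qed

section \<open>Graded components\<close>

locale lcs_complements =
  fixes br :: "'a::euclidean_space \<Rightarrow> 'a \<Rightarrow> 'a" and m :: "nat \<Rightarrow> 'a set" and K :: nat
  assumes lie: "lie_algebra br"
    and nilpotent: "lcs br (Suc K) = {0}"
    and m_subspace: "\<And>p. p \<ge> 1 \<Longrightarrow> subspace (m p)"
    and m_inter: "\<And>p. p \<ge> 1 \<Longrightarrow> m p \<inter> lcs br (Suc p) = {0}"
    and m_sum: "\<And>p. p \<ge> 1 \<Longrightarrow> {u + v | u v. u \<in> m p \<and> v \<in> lcs br (Suc p)} = lcs br p"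
begin

lemma bil: "bilinear br" and bracket_self: "br x x = 0"
  using lie unfolding lie_algebra_def by blast+

lemma m_subset_lcs: "p \<ge> 1 \<Longrightarrow> m p \<subseteq> lcs br p"
proof
  fix u assume "p \<ge> 1" "u \<in> m p"
  then have "u + 0 \<in> {u + v | u v. u \<in> m p \<and> v \<in> lcs br (Suc p)}"
    using subspace_0[OF lcs_subspace] by blast
  then show "u \<in> lcs br p" using m_sum \<open>p \<ge> 1\<close> by simp
qed

text \<open>For \<open>w \<in> C\<^sup>n\<close>, \<open>mproj n w\<close> is the \<open>m\<^sub>n\<close>-component of \<open>w\<close> in \<open>C\<^sup>n = m\<^sub>n \<oplus> C\<^sup>n\<^sup>+\<^sup>1\<close>. Peeling these off
  successively yields the components \<open>component k v \<in> m\<^sub>k\<close> of an arbitrary \<open>v\<close>.\<close>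
definition mproj :: "nat \<Rightarrow> 'a \<Rightarrow> 'a" where
  "mproj n w = (THE u. u \<in> m n \<and> w - u \<in> lcs br (Suc n))"

primrec residual :: "nat \<Rightarrow> 'a \<Rightarrow> 'a" where
  "residual 0 v = v"
| "residual (Suc n) v = residual n v - mproj (Suc n) (residual n v)"

definition component :: "nat \<Rightarrow> 'a \<Rightarrow> 'a" where
  "component k v = (if k = 0 then 0 else mproj k (residual (k - 1) v))"

lemma mproj_unique:
  assumes "n \<ge> 1" "u \<in> m n" "w - u \<in> lcs br (Suc n)" "u' \<in> m n" "w - u' \<in> lcs br (Suc n)"
  shows "u = u'"
proof -
  have "u - u' \<in> m n" using subspace_diff[OF m_subspace[OF assms(1)] assms(2,4)] .
  moreover have "u - u' = (w - u') - (w - u)" by simp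
  then have "u - u' \<in> lcs br (Suc n)" using subspace_diff[OF lcs_subspace assms(5,3)] by simp
  ultimately have "u - u' = 0" using m_inter[OF assms(1)] by blast
  then show ?thesis by simp
qed

lemma mproj:
  assumes "n \<ge> 1" "w \<in> lcs br n"
  shows "mproj n w \<in> m n" "w - mproj n w \<in> lcs br (Suc n)"
proof -
  obtain u v where "w = u + v" "u \<in> m n" "v \<in> lcs br (Suc n)"
    using assms m_sum by blast
  then have u: "u \<in> m n \<and> w - u \<in> lcs br (Suc n)" by simp
  have "mproj n w = u"
    unfolding mproj_def by (rule the_equality) (use u mproj_unique[OF assms(1)] in auto)
  then show "mproj n w \<in> m n" "w - mproj n w \<in> lcs br (Suc n)" using u by auto
qed

lemma mproj_eqI:
  assumes "n \<ge> 1" "u \<in> m n" "w - u \<in> lcs br (Suc n)"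
  shows "mproj n w = u"
proof -
  have "u \<in> lcs br n" using m_subset_lcs assms by blast
  moreover have "w - u \<in> lcs br n" using lcs_Suc_subset assms by blast
  ultimately have "w \<in> lcs br n" using subspace_add[OF lcs_subspace] by fastforce
  then show ?thesis using mproj[OF assms(1)] mproj_unique[OF assms] by blast
qed

lemma mproj_add:
  assumes "n \<ge> 1" "w1 \<in> lcs br n" "w2 \<in> lcs br n"
  shows "mproj n (w1 + w2) = mproj n w1 + mproj n w2"
proof (rule mproj_eqI[OF assms(1)])
  show "mproj n w1 + mproj n w2 \<in> m n" using mproj assms m_subspace subspace_add by blast
  have "w1 + w2 - (mproj n w1 + mproj n w2) = (w1 - mproj n w1) + (w2 - mproj n w2)" by simp
  then show "w1 + w2 - (mproj n w1 + mproj n w2) \<in> lcs br (Suc n)"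
    using mproj assms subspace_add[OF lcs_subspace] by metis
qed

lemma mproj_scale:
  assumes "n \<ge> 1" "w \<in> lcs br n"
  shows "mproj n (c *\<^sub>R w) = c *\<^sub>R mproj n w"
proof (rule mproj_eqI[OF assms(1)])
  show "c *\<^sub>R mproj n w \<in> m n" using mproj assms m_subspace subspace_scale by blast
  have "c *\<^sub>R w - c *\<^sub>R mproj n w = c *\<^sub>R (w - mproj n w)" by (simp add: algebra_simps)
  then show "c *\<^sub>R w - c *\<^sub>R mproj n w \<in> lcs br (Suc n)"
    using mproj assms subspace_scale[OF lcs_subspace] by metis
qed

lemma linear_mproj_compose:
  assumes "linear f" "\<And>v. f v \<in> lcs br n" "n \<ge> 1"
  shows "linear (\<lambda>v. mproj n (f v))"
  by (rule linearI)
    (use assms mproj_add mproj_scale linear_add[OF assms(1)] linear_scale[OF assms(1)] in auto)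

lemma residual: "linear (residual n) \<and> (\<forall>v. residual n v \<in> lcs br (Suc n))"
proof (induction n)
  case 0
  then show ?case by (simp add: linear_id[unfolded id_def])
next
  case (Suc n)
  then have "linear (\<lambda>v. mproj (Suc n) (residual n v))" by (intro linear_mproj_compose) auto
  moreover have "residual (Suc n) = (\<lambda>v. residual n v - mproj (Suc n) (residual n v))"
    by auto
  ultimately have "linear (residual (Suc n))"
    using Suc linear_compose_sub[of "residual n"] by simp
  moreover have "residual (Suc n) v \<in> lcs br (Suc (Suc n))" for v
    using mproj(2)[of "Suc n"] Suc by simp
  ultimately show ?case by blast
qed

lemma linear_component: "linear (component k)"
proof (cases "k = 0")
  case True
  then show ?thesis using linear_zero by (simp add: component_def[abs_def])
next
  case False
  then show ?thesis
    using linear_mproj_compose[of "residual (k - 1)" k] residual[of "k - 1"]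
    by (simp add: component_def[abs_def])
qed

lemma component_in_m: "k \<ge> 1 \<Longrightarrow> component k v \<in> m k"
  using mproj(1)[of k "residual (k - 1) v"] residual[of "k - 1"] by (simp add: component_def)

lemma component_in_lcs: "component k v \<in> lcs br k"
  using component_in_m[of k v] m_subset_lcs[of k] by (cases "k = 0") (auto simp: component_def)

lemma residual_fixed: "v \<in> lcs br (Suc k) \<Longrightarrow> n \<le> k \<Longrightarrow> residual n v = v"
proof (induction n)
  case (Suc n)
  have "v \<in> lcs br (Suc (Suc n))" using Suc.prems lcs_antimono[of "Suc (Suc n)" "Suc k"] by auto
  then have "mproj (Suc n) v = 0" by (intro mproj_eqI) (auto simp: m_subspace subspace_0)
  then show ?case using Suc by simp
qed simp

lemma component_eq_0: "v \<in> lcs br (Suc k) \<Longrightarrow> component k v = 0"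
  using residual_fixed[of v k "k - 1"]
  by (auto simp: component_def m_subspace subspace_0 intro!: mproj_eqI)

lemma sum_component: "(\<Sum>k\<in>{1..K}. component k v) = v"
proof -
  have "v = (\<Sum>k\<in>{1..n}. component k v) + residual n v" for n
    by (induction n) (simp_all add: component_def sum.atLeast1_atMost_eq algebra_simps)
  then show ?thesis using residual[of K] nilpotent by (metis add.right_neutral singletonD)
qed

lemma continuous_on_component: "continuous_on S g \<Longrightarrow> continuous_on S (\<lambda>x. component k (g x))"
  using linear_component[of k] linear_conv_bounded_linear bounded_linear.continuous_on by blast

lemmas component_add = linear_add[OF linear_component]
   and component_scale = linear_scale[OF linear_component]
   and component_sum = linear_sum[OF linear_component]
   and component_zero = linear_0[OF linear_component]

section \<open>Families regular under dilation\<close>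

text \<open>\<open>s\<^sup>k component k (V s p)\<close> is the \<open>m\<^sub>k\<close>-component of \<open>\<delta>\<^sub>s (V s p)\<close>, so \<open>dilation_regular V\<close> says
  that \<open>(s, p) \<mapsto> \<delta>\<^sub>s (V s p)\<close> extends continuously from \<open>]0,1]\<close> to \<open>[0,1]\<close>.\<close>
definition dilation_regular :: "(real \<Rightarrow> 'p::metric_space \<Rightarrow> 'a) \<Rightarrow> bool" where
  "dilation_regular V \<longleftrightarrow> (\<forall>k. \<exists>H. continuous_on ({0..1} \<times> UNIV) H \<and>
      (\<forall>s p. 0 < s \<and> s \<le> 1 \<longrightarrow> s ^ k *\<^sub>R component k (V s p) = H (s, p)))"

lemma dilation_regularI:
  assumes "\<And>k. continuous_on ({0..1} \<times> UNIV) (H k)"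
    and "\<And>k s p. 0 < s \<Longrightarrow> s \<le> 1 \<Longrightarrow> s ^ k *\<^sub>R component k (V s p) = H k (s, p)"
  shows "dilation_regular V"
  using assms unfolding dilation_regular_def by blast

lemma dilation_regularE:
  assumes "dilation_regular V"
  obtains H where "\<And>k. continuous_on ({0..1} \<times> UNIV) (H k)"
    "\<And>k s p. 0 < s \<Longrightarrow> s \<le> 1 \<Longrightarrow> s ^ k *\<^sub>R component k (V s p) = H k (s, p)"
  using assms unfolding dilation_regular_def by metis

text \<open>A family of the form \<open>\<Sum>\<^sub>i s\<^sup>-\<^sup>d\<^sup>\<^sub>i X\<^sub>i\<close> with \<open>X\<^sub>i\<close> continuous up to \<open>s = 0\<close> and valued in
  \<open>C\<^sup>d\<^sup>\<^sub>i\<close> is regular: \<open>component k\<close> kills the terms with \<open>d\<^sub>i > k\<close>.\<close>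
lemma dilation_regular_weighted_sum:
  fixes X :: "'i \<Rightarrow> real \<times> 'p::metric_space \<Rightarrow> 'a" and V :: "real \<Rightarrow> 'p \<Rightarrow> 'a"
  assumes fin: "finite I" and cont: "\<And>i. i \<in> I \<Longrightarrow> continuous_on ({0..1} \<times> UNIV) (X i)"
    and lcs: "\<And>i s p. i \<in> I \<Longrightarrow> 0 < s \<Longrightarrow> s \<le> 1 \<Longrightarrow> X i (s, p) \<in> lcs br (d i)"
    and V: "\<And>s p. 0 < s \<Longrightarrow> s \<le> 1 \<Longrightarrow> V s p = (\<Sum>i\<in>I. (1 / s) ^ d i *\<^sub>R X i (s, p))"
  shows "dilation_regular V"
proof (rule dilation_regularI[of "\<lambda>k z. \<Sum>i\<in>{i\<in>I. d i \<le> k}. fst z ^ (k - d i) *\<^sub>R component k (X i z)"])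
  show "continuous_on ({0..1} \<times> UNIV) (\<lambda>z. \<Sum>i\<in>{i\<in>I. d i \<le> k}. fst z ^ (k - d i) *\<^sub>R component k (X i z))"
    for k by (intro continuous_intros continuous_on_component) (use cont in auto)
  fix k and s :: real and p assume s: "0 < s" "s \<le> 1"
  have "s ^ k *\<^sub>R component k (V s p) = (\<Sum>i\<in>I. (s ^ k * (1 / s) ^ d i) *\<^sub>R component k (X i (s, p)))"
    using V[OF s] by (simp add: component_sum component_scale scaleR_sum_right)
  also have "\<dots> = (\<Sum>i\<in>I. if d i \<le> k then s ^ (k - d i) *\<^sub>R component k (X i (s, p)) else 0)"
  proof (rule sum.cong[OF refl])
    fix i assume "i \<in> I"
    show "(s ^ k * (1 / s) ^ d i) *\<^sub>R component k (X i (s, p)) =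
          (if d i \<le> k then s ^ (k - d i) *\<^sub>R component k (X i (s, p)) else 0)"
    proof (cases "d i \<le> k")
      case True
      then have "s ^ k * (1 / s) ^ d i = s ^ (k - d i)"
        using s by (simp add: power_diff power_one_over field_simps)
      then show ?thesis using True by simp
    next
      case False
      then have "X i (s, p) \<in> lcs br (Suc k)"
        using lcs[OF \<open>i \<in> I\<close> s] lcs_antimono[of "Suc k" "d i"] by auto
      then show ?thesis using False component_eq_0 by simp
    qed
  qed
  also have "\<dots> = (\<Sum>i\<in>{i\<in>I. d i \<le> k}. s ^ (k - d i) *\<^sub>R component k (X i (s, p)))"
    by (simp add: sum.inter_filter[OF fin])
  finally show "s ^ k *\<^sub>R component k (V s p) =
      (\<Sum>i\<in>{i\<in>I. d i \<le> k}. fst (s, p) ^ (k - d i) *\<^sub>R component k (X i (s, p)))" by simp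
qed

lemma component_expansion:
  assumes "\<And>k. s ^ k *\<^sub>R component k v = h k" "0 < s"
  shows "v = (\<Sum>k\<in>{1..K}. (1 / s) ^ k *\<^sub>R h k)"
proof -
  have "(1 / s) ^ k *\<^sub>R h k = component k v" for k
    using assms by (auto simp flip: assms(1) simp: power_one_over)
  then show ?thesis using sum_component[of v] by simp
qed

lemma dilation_regular_add:
  assumes "dilation_regular U" "dilation_regular V"
  shows "dilation_regular (\<lambda>s p. U s p + V s p)"
proof -
  obtain H where "\<And>k. continuous_on ({0..1} \<times> UNIV) (H k)"
    and "\<And>k s p. 0 < s \<Longrightarrow> s \<le> 1 \<Longrightarrow> s ^ k *\<^sub>R component k (U s p) = H k (s, p)"
    using dilation_regularE[OF assms(1)] by blast
  moreover obtain G where "\<And>k. continuous_on ({0..1} \<times> UNIV) (G k)"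
    and "\<And>k s p. 0 < s \<Longrightarrow> s \<le> 1 \<Longrightarrow> s ^ k *\<^sub>R component k (V s p) = G k (s, p)"
    using dilation_regularE[OF assms(2)] by blast
  ultimately show ?thesis
    by (intro dilation_regularI[of "\<lambda>k z. H k z + G k z"])
      (auto intro!: continuous_intros simp: component_add scaleR_add_right)
qed

lemma dilation_regular_scale:
  assumes "dilation_regular U"
  shows "dilation_regular (\<lambda>s p. c *\<^sub>R U s p)"
proof -
  obtain H where "\<And>k. continuous_on ({0..1} \<times> UNIV) (H k)"
    and "\<And>k s p. 0 < s \<Longrightarrow> s \<le> 1 \<Longrightarrow> s ^ k *\<^sub>R component k (U s p) = H k (s, p)"
    using dilation_regularE[OF assms] by blast
  then show ?thesis
    by (intro dilation_regularI[of "\<lambda>k z. c *\<^sub>R H k z"])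
      (auto intro!: continuous_intros simp: component_scale scaleR_left_commute[of _ c] simp del: scaleR_scaleR)
qed

lemma dilation_regular_zero: "dilation_regular (\<lambda>s p. 0)"
  by (rule dilation_regularI[of "\<lambda>k z. 0"]) (simp_all add: component_zero)

lemma dilation_regular_sum:
  "(\<And>i. i \<in> A \<Longrightarrow> dilation_regular (F i)) \<Longrightarrow> dilation_regular (\<lambda>s p. \<Sum>i\<in>A. F i s p)"
  by (induction A rule: infinite_finite_induct) (simp_all add: dilation_regular_zero dilation_regular_add)

lemma dilation_regular_bracket:
  fixes U V :: "real \<Rightarrow> 'p::metric_space \<Rightarrow> 'a"
  assumes "dilation_regular U" "dilation_regular V"
  shows "dilation_regular (\<lambda>s p. br (U s p) (V s p))"
proof -
  obtain H where H_cont: "\<And>k. continuous_on ({0..1} \<times> UNIV) (H k)"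
    and H: "\<And>k s p. 0 < s \<Longrightarrow> s \<le> 1 \<Longrightarrow> s ^ k *\<^sub>R component k (U s p) = H k (s, p)"
    using dilation_regularE[OF assms(1)] by blast
  obtain G where G_cont: "\<And>k. continuous_on ({0..1} \<times> UNIV) (G k)"
    and G: "\<And>k s p. 0 < s \<Longrightarrow> s \<le> 1 \<Longrightarrow> s ^ k *\<^sub>R component k (V s p) = G k (s, p)"
    using dilation_regularE[OF assms(2)] by blast
  show ?thesis
  proof (rule dilation_regular_weighted_sum[where I = "{1..K} \<times> {1..K}" and d = "\<lambda>ij. fst ij + snd ij"
      and X = "\<lambda>ij z. br (H (fst ij) z) (G (snd ij) z)"])
    show "continuous_on ({0..1} \<times> UNIV) (\<lambda>z. br (H (fst ij) z) (G (snd ij) z))" for ij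
      by (rule bilinear_continuous_on_compose[OF H_cont G_cont bil])
    show "br (H (fst ij) (s, p)) (G (snd ij) (s, p)) \<in> lcs br (fst ij + snd ij)"
      if ij: "ij \<in> {1..K} \<times> {1..K}" and s: "0 < s" "s \<le> 1" for ij s p
    proof -
      have "H (fst ij) (s, p) \<in> lcs br (fst ij)" "G (snd ij) (s, p) \<in> lcs br (snd ij)"
        using H[OF s] G[OF s] component_in_lcs subspace_scale[OF lcs_subspace] by metis+
      then show ?thesis using lcs_bracket[OF lie] ij by auto
    qed
    show "br (U s p) (V s p) = (\<Sum>ij\<in>{1..K} \<times> {1..K}.
        (1 / s) ^ (fst ij + snd ij) *\<^sub>R br (H (fst ij) (s, p)) (G (snd ij) (s, p)))"
      if "0 < s" "s \<le> 1" for s p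
    proof -
      have "br (U s p) (V s p) = br (\<Sum>i\<in>{1..K}. (1 / s) ^ i *\<^sub>R H i (s, p))
                                     (\<Sum>j\<in>{1..K}. (1 / s) ^ j *\<^sub>R G j (s, p))"
        using component_expansion[OF H[OF that] that(1)] component_expansion[OF G[OF that] that(1)]
        by metis
      also have "\<dots> = (\<Sum>(i, j)\<in>{1..K} \<times> {1..K}.
          br ((1 / s) ^ i *\<^sub>R H i (s, p)) ((1 / s) ^ j *\<^sub>R G j (s, p)))"
        by (rule bilinear_sum[OF bil])
      also have "\<dots> = (\<Sum>ij\<in>{1..K} \<times> {1..K}.
          (1 / s) ^ (fst ij + snd ij) *\<^sub>R br (H (fst ij) (s, p)) (G (snd ij) (s, p)))"
        by (intro sum.cong refl)
          (auto simp: bilinear_lmul[OF bil] bilinear_rmul[OF bil] power_add mult.commute)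
      finally show ?thesis .
    qed
  qed simp
qed

lemma dilation_regular_rbr:
  fixes Ls :: "(real \<Rightarrow> 'p::metric_space \<Rightarrow> 'a) list"
  shows "(\<And>L. L \<in> set Ls \<Longrightarrow> dilation_regular L) \<Longrightarrow>
    dilation_regular (\<lambda>s p. rbr br (map (\<lambda>L. L s p) Ls))"
proof (induction Ls rule: induct_list012)
  case (3 L L' Ls)
  then show ?case using dilation_regular_bracket[of L] by simp
qed (simp_all add: dilation_regular_zero)

lemma dilation_regular_gmul:
  fixes X Y :: "real \<Rightarrow> 'p::metric_space \<Rightarrow> 'a"
  assumes "dilation_regular X" "dilation_regular Y"
  shows "dilation_regular (\<lambda>s p. gmul br (X s p) (Y s p))"
  unfolding gmul_def
proof (intro dilation_regular_sum dilation_regular_scale)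
  fix rs :: "(nat \<times> nat) list"
  let ?word = "concat (map (\<lambda>(r, s). replicate r X @ replicate s Y) rs)"
  have "dilation_regular (\<lambda>s p. rbr br (map (\<lambda>L. L s p) ?word))"
    by (rule dilation_regular_rbr) (use dynkin_word_set[of X Y rs] assms in auto)
  then show "dilation_regular (\<lambda>s p. rbr br (concat (map (\<lambda>(r, t). replicate r (X s p) @ replicate t (Y s p)) rs)))"
    by (simp add: dynkin_word_map[of "\<lambda>L. L _ _" X Y rs, symmetric])
qed

lemma dilation_regular_extends:
  assumes "dilation_regular V"
  obtains \<Psi> where "continuous_on ({0..1} \<times> UNIV) \<Psi>"
    "\<And>s p. 0 < s \<Longrightarrow> s \<le> 1 \<Longrightarrow> \<Psi> (s, p) = (\<Sum>k\<in>{1..K}. s ^ k *\<^sub>R component k (V s p))"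
proof -
  obtain H where "\<And>k. continuous_on ({0..1} \<times> UNIV) (H k)"
    and "\<And>k s p. 0 < s \<Longrightarrow> s \<le> 1 \<Longrightarrow> s ^ k *\<^sub>R component k (V s p) = H k (s, p)"
    using dilation_regularE[OF assms] by blast
  then show thesis by (intro that[of "\<lambda>z. \<Sum>k\<in>{1..K}. H k z"]) (auto intro!: continuous_intros)
qed

end

section \<open>Dilations and quasi-norms\<close>

lemma small_value_imp_small_norm:
  fixes q :: "'a::real_normed_vector \<Rightarrow> real"
  assumes "continuous_on UNIV q" "\<And>x. 0 \<le> q x" "\<And>x. q x = 0 \<longleftrightarrow> x = 0"
    and "compact {x. q x \<le> 1}" and "\<eta> > 0"
  obtains d where "0 < d" "d \<le> 1" "\<And>a. q a \<le> d \<Longrightarrow> norm a < \<eta>"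
proof (cases "{x. q x \<le> 1} \<inter> {a. \<eta> \<le> norm a} = {}")
  case True
  show ?thesis by (rule that[of 1]) (use True in \<open>auto simp: not_le\<close>)
next
  case False
  let ?F = "{x. q x \<le> 1} \<inter> {a. \<eta> \<le> norm a}"
  have "compact ?F" by (intro compact_Int_closed assms(4) closed_Collect_le continuous_intros)
  then obtain a0 where a0: "a0 \<in> ?F" and a0_min: "\<And>a. a \<in> ?F \<Longrightarrow> q a0 \<le> q a"
    using continuous_attains_inf[OF _ False continuous_on_subset[OF assms(1)]] by blast
  have "q a0 > 0" using a0 assms(2,3,5) by (metis less_eq_real_def mem_Collect_eq Int_iff norm_zero not_le)
  show ?thesis
  proof (rule that[of "min 1 (q a0 / 2)"])
    fix a assume "q a \<le> min 1 (q a0 / 2)"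
    then show "norm a < \<eta>" using a0_min[of a] \<open>q a0 > 0\<close> by force
  qed (use \<open>q a0 > 0\<close> in auto)
qed

lemma uniform_perturbation_at_zero:
  fixes f :: "'c::metric_space \<times> ('a::real_normed_vector \<times> 'b::metric_space) \<Rightarrow> real"
  assumes "compact I" "compact D" "compact S" "0 \<in> D"
    and "continuous_on (I \<times> (D \<times> S)) f" and "\<epsilon> > 0"
  obtains \<eta> where "\<eta> > 0"
    "\<And>s a b. s \<in> I \<Longrightarrow> a \<in> D \<Longrightarrow> b \<in> S \<Longrightarrow> norm a < \<eta> \<Longrightarrow> \<bar>f (s, (a, b)) - f (s, (0, b))\<bar> < \<epsilon>"
proof -
  have "uniformly_continuous_on (I \<times> (D \<times> S)) f"
    using assms by (intro compact_uniformly_continuous compact_Times)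
  then obtain \<eta> where "\<eta> > 0" and \<eta>: "\<And>z z'. z \<in> I \<times> (D \<times> S) \<Longrightarrow> z' \<in> I \<times> (D \<times> S) \<Longrightarrow>
      dist z' z < \<eta> \<Longrightarrow> dist (f z') (f z) < \<epsilon>"
    unfolding uniformly_continuous_on_def using assms(6) by metis
  show thesis
  proof (rule that[OF \<open>\<eta> > 0\<close>])
    fix s a b assume "s \<in> I" "a \<in> D" "b \<in> S" "norm a < \<eta>"
    moreover have "dist (s, (a, b)) (s, (0, b)) = norm a"
      by (simp add: dist_Pair_Pair dist_norm)
    ultimately show "\<bar>f (s, (a, b)) - f (s, (0, b))\<bar> < \<epsilon>"
      using \<eta>[of "(s, (0, b))" "(s, (a, b))"] assms(4) by (simp add: dist_real_def)
  qed
qed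

locale graded_dilation = lcs_complements +
  fixes dil :: "real \<Rightarrow> 'a \<Rightarrow> 'a"
  assumes linear_dil: "\<And>t. t > 0 \<Longrightarrow> linear (dil t)"
    and dil_m: "\<And>t p v. t > 0 \<Longrightarrow> p \<ge> 1 \<Longrightarrow> v \<in> m p \<Longrightarrow> dil t v = t ^ p *\<^sub>R v"
begin

lemma dil_expand:
  assumes "t > 0" shows "dil t v = (\<Sum>j\<in>{1..K}. t ^ j *\<^sub>R component j v)"
proof -
  have "dil t v = (\<Sum>j\<in>{1..K}. dil t (component j v))"
    using linear_sum[OF linear_dil[OF assms]] sum_component[of v] by metis
  also have "\<dots> = (\<Sum>j\<in>{1..K}. t ^ j *\<^sub>R component j v)"
    by (intro sum.cong refl) (simp add: dil_m assms component_in_m)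
  finally show ?thesis .
qed

lemma dil_inverse:
  assumes "t > 0" shows "dil t (dil (1 / t) v) = v"
proof -
  have "dil t (dil (1 / t) v) = dil t (\<Sum>j\<in>{1..K}. (1 / t) ^ j *\<^sub>R component j v)"
    using assms by (simp add: dil_expand)
  also have "\<dots> = (\<Sum>j\<in>{1..K}. (1 / t) ^ j *\<^sub>R dil t (component j v))"
    using assms by (simp add: linear_sum[OF linear_dil] linear_scale[OF linear_dil])
  also have "\<dots> = (\<Sum>j\<in>{1..K}. component j v)"
    by (intro sum.cong refl) (use assms dil_m component_in_m in \<open>auto simp: power_one_over\<close>)
  also have "\<dots> = v" by (rule sum_component)
  finally show ?thesis .
qed

lemma dilation_regular_dil_inverse:
  assumes "continuous_on UNIV f"
  shows "dilation_regular (\<lambda>s p. dil (1 / s) (f p))"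
  by (rule dilation_regular_weighted_sum[where I = "{1..K}" and d = "\<lambda>j. j" and X = "\<lambda>j z. component j (f (snd z))"])
    (auto intro!: continuous_on_component continuous_on_compose2[OF assms] continuous_intros
      simp: component_in_lcs dil_expand)

lemma rescaled_gmul_extends:
  obtains \<Psi> where "continuous_on ({0..1} \<times> UNIV) \<Psi>"
    "\<And>s a b. 0 < s \<Longrightarrow> s \<le> 1 \<Longrightarrow> \<Psi> (s, (a, b)) = dil s (gmul br (dil (1 / s) a) (dil (1 / s) b))"
proof -
  have "dilation_regular (\<lambda>s (p :: 'a \<times> 'a). gmul br (dil (1 / s) (fst p)) (dil (1 / s) (snd p)))"
    by (intro dilation_regular_gmul dilation_regular_dil_inverse continuous_intros)
  then obtain \<Psi> where "continuous_on ({0..1} \<times> UNIV) \<Psi>" and "\<And>s p. 0 < s \<Longrightarrow> s \<le> 1 \<Longrightarrow>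
      \<Psi> (s, p) = (\<Sum>k\<in>{1..K}. s ^ k *\<^sub>R component k (gmul br (dil (1 / s) (fst p)) (dil (1 / s) (snd p))))"
    by (rule dilation_regular_extends) blast
  then show thesis by (intro that[of \<Psi>]) (simp_all add: dil_expand)
qed

end

locale homogeneous_quasi_norm = graded_dilation +
  fixes q :: "'a \<Rightarrow> real"
  assumes q_continuous: "continuous_on UNIV q"
    and q_nonneg: "\<And>x. 0 \<le> q x"
    and q_eq_0: "\<And>x. q x = 0 \<longleftrightarrow> x = 0"
    and q_dil: "\<And>t x. t > 0 \<Longrightarrow> q (dil t x) = t * q x"
begin

text \<open>If \<open>q x \<le> 1\<close> with \<open>|x|\<close> large, dilate \<open>x\<close> down to a point \<open>u\<close> on the unit sphere; then \<open>s \<ge> c\<close>,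
  where \<open>c\<close> is the minimum of \<open>q\<close> on the sphere, and \<open>x = \<delta>\<^sub>1\<^sub>/\<^sub>s u\<close> is bounded in terms of \<open>c\<close>.\<close>
lemma bounded_sublevel: "bounded {x. q x \<le> 1}"
proof -
  obtain u0 :: 'a where "norm u0 = 1" using vector_choose_size[of 1] by auto
  then have "sphere (0::'a) 1 \<noteq> {}" by auto
  then obtain w where w: "w \<in> sphere (0::'a) 1" and w_min: "\<And>u. u \<in> sphere 0 1 \<Longrightarrow> q w \<le> q u"
    using continuous_attains_inf[OF compact_sphere _ continuous_on_subset[OF q_continuous]] by blast
  define c where "c = q w"
  have "c > 0"
    using w q_eq_0 q_nonneg[of w] unfolding c_def by (metis less_eq_real_def norm_zero mem_sphere_0 zero_neq_one)
  have "\<forall>j. \<exists>B>0. \<forall>x. norm (component j x) \<le> norm x * B"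
    using linear_component linear_conv_bounded_linear bounded_linear.pos_bounded by blast
  then obtain B where B: "\<And>j. B j > 0" "\<And>j x. norm (component j x) \<le> norm x * B j"
    by metis
  have "norm x \<le> max 1 (\<Sum>j\<in>{1..K}. (1 / c) ^ j * B j)" if "q x \<le> 1" for x
  proof (rule ccontr)
    assume "\<not> ?thesis"
    then have big: "norm x > 1" "norm x > (\<Sum>j\<in>{1..K}. (1 / c) ^ j * B j)" by auto
    define h where "h = (\<lambda>s::real. norm (\<Sum>j\<in>{1..K}. s ^ j *\<^sub>R component j x))"
    have "continuous_on {0..1} h" unfolding h_def by (intro continuous_intros)
    moreover have "h 0 = 0" by (simp add: h_def power_0_left)
    moreover have "h 1 = norm x" by (simp only: h_def power_one scaleR_one sum_component)
    ultimately obtain s where s: "0 \<le> s" "s \<le> 1" "h s = 1"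
      using IVT'[of h 0 1 1] big by auto
    then have "s > 0" using \<open>h 0 = 0\<close> by (cases "s = 0") auto
    define u where "u = dil s x"
    have "norm u = 1" using s \<open>s > 0\<close> by (simp add: u_def h_def dil_expand)
    then have "c \<le> q u" unfolding c_def using w_min by auto
    also have "\<dots> \<le> s" using \<open>s > 0\<close> \<open>q x \<le> 1\<close> by (simp add: u_def q_dil mult_left_le)
    finally have "c \<le> s" .
    have "x = dil (1 / s) u" using dil_inverse[of "1 / s" x] \<open>s > 0\<close> by (simp add: u_def)
    also have "\<dots> = (\<Sum>j\<in>{1..K}. (1 / s) ^ j *\<^sub>R component j u)"
      using \<open>s > 0\<close> by (simp add: dil_expand)
    finally have "norm x \<le> (\<Sum>j\<in>{1..K}. norm ((1 / s) ^ j *\<^sub>R component j u))"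
      by (metis norm_sum)
    also have "\<dots> \<le> (\<Sum>j\<in>{1..K}. (1 / c) ^ j * B j)"
    proof (rule sum_mono)
      fix j
      have "norm ((1 / s) ^ j *\<^sub>R component j u) \<le> (1 / s) ^ j * B j"
        using B(2)[of j u] \<open>norm u = 1\<close> \<open>s > 0\<close> by (simp add: mult_left_mono)
      also have "\<dots> \<le> (1 / c) ^ j * B j"
        using B(1)[of j] \<open>c \<le> s\<close> \<open>c > 0\<close>
        by (intro mult_right_mono power_mono) (auto simp: divide_simps)
      finally show "norm ((1 / s) ^ j *\<^sub>R component j u) \<le> (1 / c) ^ j * B j" .
    qed
    finally show False using big by simp
  qed
  then show ?thesis unfolding bounded_iff by blast
qed

lemma compact_sublevel: "compact {x. q x \<le> 1}"
  using bounded_sublevel closed_Collect_le[OF q_continuous continuous_on_const]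
  by (simp add: compact_eq_bounded_closed)

lemma compact_unit_sphere: "compact {x. q x = 1}"
proof -
  have "bounded {x. q x = 1}" by (rule bounded_subset[OF bounded_sublevel]) auto
  then show ?thesis
    using closed_Collect_eq[OF q_continuous continuous_on_const] by (simp add: compact_eq_bounded_closed)
qed

lemma gmul_almost_isometric:
  assumes "\<epsilon> > 0"
  shows "\<exists>\<delta>>0. \<exists>C>0. \<forall>x y. q y > C \<and> q x \<le> \<delta> * q y \<longrightarrow> \<bar>q (gmul br x y) - q y\<bar> \<le> \<epsilon> * q y"
proof -
  obtain \<Psi> where \<Psi>_cont: "continuous_on ({0..1} \<times> UNIV) \<Psi>"
    and \<Psi>: "\<And>s a b. 0 < s \<Longrightarrow> s \<le> 1 \<Longrightarrow> \<Psi> (s, (a, b)) = dil s (gmul br (dil (1 / s) a) (dil (1 / s) b))"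
    by (rule rescaled_gmul_extends) blast
  have \<Psi>_zero: "\<Psi> (s, (0, b)) = b" if "0 < s" "s \<le> 1" for s b
    using \<Psi>[OF that] dil_inverse[OF that(1)] linear_0[OF linear_dil[of "1 / s"]] that
    by (simp add: gmul_zero_left[OF bil bracket_self])
  have "continuous_on ({0..1} \<times> ({x. q x \<le> 1} \<times> {x. q x = 1})) (\<lambda>z. q (\<Psi> z))"
    by (rule continuous_on_compose2[OF q_continuous continuous_on_subset[OF \<Psi>_cont]]) auto
  moreover have "0 \<in> {x. q x \<le> 1}" using q_eq_0[of 0] by simp
  ultimately obtain \<eta> where "\<eta> > 0" and \<eta>: "\<And>s a b. s \<in> {0..1} \<Longrightarrow> a \<in> {x. q x \<le> 1} \<Longrightarrow>
      b \<in> {x. q x = 1} \<Longrightarrow> norm a < \<eta> \<Longrightarrow> \<bar>q (\<Psi> (s, (a, b))) - q (\<Psi> (s, (0, b)))\<bar> < \<epsilon>"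
    using uniform_perturbation_at_zero[OF compact_Icc compact_sublevel compact_unit_sphere _ _ assms]
    by blast
  obtain \<delta> where "0 < \<delta>" "\<delta> \<le> 1" and \<delta>: "\<And>a. q a \<le> \<delta> \<Longrightarrow> norm a < \<eta>"
    using small_value_imp_small_norm[OF q_continuous q_nonneg q_eq_0 compact_sublevel \<open>\<eta> > 0\<close>] by blast
  have "\<bar>q (gmul br x y) - q y\<bar> \<le> \<epsilon> * q y" if y: "q y > 1" and x: "q x \<le> \<delta> * q y" for x y
  proof -
    define s where "s = 1 / q y"
    have s: "0 < s" "s \<le> 1" "s * q y = 1" using y by (auto simp: s_def)
    have "q (dil s x) = s * q x" by (rule q_dil[OF s(1)])
    also have "\<dots> \<le> s * (\<delta> * q y)" using x s(1) by (rule mult_left_mono[OF _ less_imp_le])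
    also have "\<dots> = \<delta>" using s(3) by (simp add: algebra_simps)
    finally have "q (dil s x) \<le> \<delta>" .
    moreover have "q (dil s y) = 1" using s by (simp add: q_dil)
    moreover have "\<Psi> (s, (dil s x, dil s y)) = dil s (gmul br x y)"
      using dil_inverse[of "1 / s"] s by (simp add: \<Psi>)
    ultimately have "\<bar>s * q (gmul br x y) - 1\<bar> < \<epsilon>"
      using \<eta>[of s "dil s x" "dil s y"] \<delta> \<open>\<delta> \<le> 1\<close> \<Psi>_zero[OF s(1,2)] s(1,2) by (simp add: q_dil)
    then have "q y * \<bar>s * q (gmul br x y) - 1\<bar> \<le> q y * \<epsilon>"
      using y by (intro mult_left_mono) auto
    moreover have "q (gmul br x y) - q y = q y * (s * q (gmul br x y) - 1)"
      using s(3) by (simp add: algebra_simps)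
    ultimately show ?thesis using y by (simp add: abs_mult mult.commute)
  qed
  then show ?thesis using \<open>0 < \<delta>\<close> by (intro exI[of _ \<delta>] conjI exI[of _ 1]) auto
qed

end

theorem lemma2p15:
  fixes br :: "'a::euclidean_space \<Rightarrow> 'a \<Rightarrow> 'a" and q :: "'a \<Rightarrow> real" and \<epsilon> :: real
  assumes "lie_algebra br" and "nilpotent_lie br" and "quasi_norm br q" and "\<epsilon> > 0"
  shows "\<exists>\<delta>>0. \<exists>C>0. \<forall>x y. q y > C \<and> q x \<le> \<delta> * q y \<longrightarrow>
           \<bar>q (gmul br x y) - q y\<bar> \<le> \<epsilon> * q y"
proof -
  obtain K where nilpotent: "lcs br (Suc K) = {0}" using assms(2) by (rule nilpotent_lie_lcs_Suc)
  have q: "continuous_on UNIV q" "\<And>x. 0 \<le> q x" "\<And>x. q x = 0 \<longleftrightarrow> x = 0"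
    using assms(3) unfolding quasi_norm_def by auto
  obtain dil where "dilation_family br dil" and q_dil: "\<And>t x. t > 0 \<Longrightarrow> q (dil t x) = t * q x"
    using assms(3) unfolding quasi_norm_def by blast
  then obtain m where
    m: "\<And>p. p \<ge> 1 \<Longrightarrow> subspace (m p) \<and> m p \<inter> lcs br (Suc p) = {0} \<and>
                {u + v | u v. u \<in> m p \<and> v \<in> lcs br (Suc p)} = lcs br p"
    and dil: "\<And>t. t > 0 \<Longrightarrow> linear (dil t) \<and> (\<forall>p\<ge>1. \<forall>v\<in>m p. dil t v = t ^ p *\<^sub>R v)"
    unfolding dilation_family_def by blast
  interpret homogeneous_quasi_norm br m K dil q
    by unfold_locales (simp_all add: assms(1) nilpotent q q_dil m dil linear_add linear_scale)
  show ?thesis using assms(4) by (rule gmul_almost_isometric)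
qed

end
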